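(* For every $n\equiv 9 \pmod{16}$ (with $n\geq 9$), there exists an almost 2-perfect maximum 8-cycle packing of $K_n$.
   Context: An 8-cycle packing of $K_n$ on vertex set $\mathcal{X}$ is a triple $(\mathcal{X},\mathcal{C},\mathcal{L})$ with $\mathcal{C}$ a collection of pairwise edge-disjoint 8-cycles of $K_n$ and leave $\mathcal{L}$ the set of edges in no cycle of $\mathcal{C}$; it is maximum if $|\mathcal{L}|$ is minimum among all 8-cycle packings of $K_n$. For an 8-cycle $C$, an inside 8-cycle of $C$ is an 8-cycle on the same vertex set sharing no edge with $C$. The packing is almost 2-perfect if one can choose for each $C\in\mathcal{C}$ an inside 8-cycle $C'$ such that $(\mathcal{X},\{C'\},\mathcal{L})$ is again an 8-cycle packing with the same leave. *)

theory Defs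
  imports Main
begin

definition complete_edges :: "'a set \<Rightarrow> 'a set set" where
  "complete_edges X = {{x, y} | x y. x \<in> X \<and> y \<in> X \<and> x \<noteq> y}"

definition cycle_edges :: "'a list \<Rightarrow> 'a set set" where
  "cycle_edges vs = {{vs ! i, vs ! ((i + 1) mod length vs)} | i. i < length vs}"

definition is_8cycle :: "'a set \<Rightarrow> 'a set set \<Rightarrow> bool" where
  "is_8cycle X c \<longleftrightarrow>
     (\<exists>vs. length vs = 8 \<and> distinct vs \<and> set vs \<subseteq> X \<and> c = cycle_edges vs)"

definition cyc_vertices :: "'a set set \<Rightarrow> 'a set" where
  "cyc_vertices c = \<Union> c"

definition cycle8_packing :: "'a set \<Rightarrow> 'a set set set \<Rightarrow> 'a set set \<Rightarrow> bool" where
  "cycle8_packing X C L \<longleftrightarrow>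
     (\<forall>c\<in>C. is_8cycle X c) \<and>
     (\<forall>c1\<in>C. \<forall>c2\<in>C. c1 \<noteq> c2 \<longrightarrow> c1 \<inter> c2 = {}) \<and>
     L = complete_edges X - \<Union> C"

definition max_cycle8_packing :: "'a set \<Rightarrow> 'a set set set \<Rightarrow> 'a set set \<Rightarrow> bool" where
  "max_cycle8_packing X C L \<longleftrightarrow>
     cycle8_packing X C L \<and>
     (\<forall>C' L'. cycle8_packing X C' L' \<longrightarrow> card L \<le> card L')"

definition inside_8cycle :: "'a set \<Rightarrow> 'a set set \<Rightarrow> 'a set set \<Rightarrow> bool" where
  "inside_8cycle X c c' \<longleftrightarrow>
     is_8cycle X c' \<and> cyc_vertices c' = cyc_vertices c \<and> c \<inter> c' = {}"

definition almost_2_perfect :: "'a set \<Rightarrow> 'a set set set \<Rightarrow> 'a set set \<Rightarrow> bool" where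
  "almost_2_perfect X C L \<longleftrightarrow>
     (\<exists>f. inj_on f C \<and> (\<forall>c\<in>C. inside_8cycle X c (f c)) \<and> cycle8_packing X (f ` C) L)"

end

theory Submission
  imports Defs
begin

text \<open>
  Write n = 16k + 9 and split the vertices into the point 0 and 4k + 2 blocks of four
  consecutive vertices; consecutive pairs of blocks form 2k + 1 groups. The edges of K_n,
  apart from a 4-cycle inside block 0, are partitioned into pieces of three kinds: a copy of
  K_9 minus a 4-cycle on the point 0 together with one group, a K_{4,4} plus a 4-cycle on
  each side joining the first blocks of groups 2j - 1 and 2j, and a K_{4,4} between any
  other two blocks from different groups. Each kind of piece has an explicit decomposition
  into 8-cycles together with a second decomposition by inside 8-cycles, checked by
  evaluation; transported to all pieces, this yields an almost 2-perfect packing with a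
  leave of 4 edges. No packing has a smaller leave, since the leave has
  n(n - 1)/2 - 8|C| \<equiv> 4 (mod 8) edges.
\<close>

section \<open>Counting edges of cycles and leaves\<close>

lemma cycle_edges_conv_image:
  "cycle_edges vs = (\<lambda>i. {vs ! i, vs ! ((i + 1) mod length vs)}) ` {..<length vs}"
  unfolding cycle_edges_def by auto

lemma succ_mod_less: "i < n \<Longrightarrow> Suc i mod n < (n::nat)"
  by (rule mod_less_divisor) linarith

lemma succ_mod_neq:
  fixes i n :: nat
  assumes "i < n" "2 \<le> n"
  shows "(i + 1) mod n \<noteq> i"
  using assms by (cases "i + 1 = n") auto

lemma succ_succ_mod_neq:
  fixes i n :: nat
  assumes "i < n" "3 \<le> n"
  shows "(i + 2) mod n \<noteq> i"
proof (cases "i + 2 < n")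
  case False
  then have "(i + 2) mod n = i + 2 - n"
    using assms by (simp add: le_mod_geq)
  then show ?thesis using assms False by simp
qed simp

lemma card_cycle_edges:
  assumes "distinct vs" "3 \<le> length vs"
  shows "card (cycle_edges vs) = length vs"
proof -
  let ?n = "length vs" and ?succ = "\<lambda>i. (i + 1) mod length vs"
  have nth_eq: "vs ! i = vs ! j \<longleftrightarrow> i = j" if "i < ?n" "j < ?n" for i j
    using assms(1) that by (simp add: nth_eq_iff_index_eq)
  have no_2cycle: "\<not> (i = ?succ j \<and> j = ?succ i)" if "i < ?n" for i j
  proof
    assume "i = ?succ j \<and> j = ?succ i"
    then have "i = (?succ i + 1) mod ?n" by metis
    also have "\<dots> = (i + 2) mod ?n" unfolding mod_add_left_eq by (simp add: add.assoc)
    finally show False using succ_succ_mod_neq[OF that assms(2)] by simp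
  qed
  have "inj_on (\<lambda>i. {vs ! i, vs ! ?succ i}) {..<?n}"
  proof (rule inj_onI)
    fix i j assume i: "i \<in> {..<?n}" and j: "j \<in> {..<?n}"
      and eq: "{vs ! i, vs ! ?succ i} = {vs ! j, vs ! ?succ j}"
    have "?succ i < ?n" "?succ j < ?n" using i j by (simp_all add: succ_mod_less)
    with eq i j have "i = j \<or> (i = ?succ j \<and> ?succ i = j)"
      unfolding doubleton_eq_iff by (simp add: nth_eq, blast)
    moreover have "\<not> (i = ?succ j \<and> j = ?succ i)" using i by (intro no_2cycle) simp
    ultimately show "i = j" by auto
  qed
  then show ?thesis
    unfolding cycle_edges_conv_image by (simp add: card_image)
qed

lemma cycle_edges_subset_complete_edges:
  assumes "distinct vs" "2 \<le> length vs"
  shows "cycle_edges vs \<subseteq> complete_edges (set vs)"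
proof
  fix e assume "e \<in> cycle_edges vs"
  then obtain i where i: "i < length vs" "e = {vs ! i, vs ! ((i + 1) mod length vs)}"
    unfolding cycle_edges_def by blast
  have "(i + 1) mod length vs < length vs" using i(1) by (simp add: succ_mod_less)
  moreover have "vs ! i \<noteq> vs ! ((i + 1) mod length vs)"
    using succ_mod_neq[OF i(1) assms(2)] assms(1) i(1) calculation by (simp add: nth_eq_iff_index_eq)
  moreover have "vs ! i \<in> set vs" "vs ! ((i + 1) mod length vs) \<in> set vs"
    using i(1) calculation(1) by simp_all
  ultimately show "e \<in> complete_edges (set vs)"
    unfolding complete_edges_def using i(2) by blast
qed

lemma cyc_vertices_cycle_edges:
  assumes "vs \<noteq> []"
  shows "cyc_vertices (cycle_edges vs) = set vs"
proof
  show "cyc_vertices (cycle_edges vs) \<subseteq> set vs"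
    unfolding cyc_vertices_def cycle_edges_conv_image using assms by (auto simp: succ_mod_less)
  show "set vs \<subseteq> cyc_vertices (cycle_edges vs)"
    unfolding cyc_vertices_def cycle_edges_conv_image by (auto simp: in_set_conv_nth)
qed

lemma complete_edges_mono: "X \<subseteq> Y \<Longrightarrow> complete_edges X \<subseteq> complete_edges Y"
  unfolding complete_edges_def by blast

lemma is_8cycleD:
  assumes "is_8cycle X c"
  shows "c \<subseteq> complete_edges X" "card c = 8"
proof -
  obtain vs where vs: "length vs = 8" "distinct vs" "set vs \<subseteq> X" "c = cycle_edges vs"
    using assms unfolding is_8cycle_def by blast
  show "card c = 8" using card_cycle_edges[of vs] vs by simp
  show "c \<subseteq> complete_edges X"
    using cycle_edges_subset_complete_edges[of vs] complete_edges_mono[OF vs(3)] vs by simp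
qed

lemma complete_edges_eq: "complete_edges X = {B. B \<subseteq> X \<and> card B = 2}"
  unfolding complete_edges_def by (auto simp: card_2_iff)

lemma finite_complete_edges: "finite X \<Longrightarrow> finite (complete_edges X)"
  unfolding complete_edges_eq by (rule finite_subset[of _ "Pow X"]) auto

lemma card_complete_edges: "finite X \<Longrightarrow> card (complete_edges X) = card X choose 2"
  unfolding complete_edges_eq by (rule n_subsets)

lemma card_leave_plus_card_cycles:
  assumes "finite X" "cycle8_packing X C L"
  shows "card L + 8 * card C = card X choose 2"
proof -
  let ?E = "complete_edges X"
  have fin: "finite ?E" using finite_complete_edges[OF assms(1)] .
  have cyc: "c \<subseteq> ?E" "card c = 8" if "c \<in> C" for c
  proof -
    have "is_8cycle X c" using assms(2) that unfolding cycle8_packing_def by blast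
    then show "c \<subseteq> ?E" "card c = 8" by (rule is_8cycleD)+
  qed
  have sub: "\<Union> C \<subseteq> ?E" and L: "L = ?E - \<Union> C"
    using cyc(1) assms(2) unfolding cycle8_packing_def by blast+
  have "pairwise disjnt C"
    using assms(2) unfolding cycle8_packing_def pairwise_def disjnt_def by blast
  moreover have "finite c" if "c \<in> C" for c using cyc(1)[OF that] fin finite_subset by blast
  ultimately have "card (\<Union> C) = 8 * card C"
    using card_Union_disjoint[of C] cyc(2) by simp
  moreover have "card L = card ?E - card (\<Union> C)"
    unfolding L using card_Diff_subset[OF finite_subset[OF sub fin] sub] .
  moreover have "card (\<Union> C) \<le> card ?E" using card_mono[OF fin sub] .
  ultimately show ?thesis using card_complete_edges[OF assms(1)] by simp
qed

lemma card_leave_ge_4: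
  fixes n :: nat
  assumes "n mod 16 = 9" "cycle8_packing {..<n} C L"
  shows "4 \<le> card L"
proof -
  define k where "k = n div 16"
  have k: "n = 16 * k + 9" unfolding k_def using div_mult_mod_eq[of n 16] assms(1) by linarith
  define m where "m = 16 * k * k + 17 * k + 4"
  have "n choose 2 = 8 * m + 4"
    unfolding choose_two k m_def by (simp add: algebra_simps)
  then have "card L + 8 * card C = 8 * m + 4"
    using card_leave_plus_card_cycles[OF _ assms(2)] by simp
  then have "(card L + 8 * card C) mod 8 = 4" by simp
  then have "card L mod 8 = 4" by simp
  then show ?thesis using mod_less_eq_dividend[of "card L" 8] by simp
qed

section \<open>Decompositions into 8-cycles paired with inside 8-cycles\<close>

definition inside_decomposition ::
    "'a set \<Rightarrow> ('a set set \<times> 'a set set) set \<Rightarrow> 'a set set \<Rightarrow> bool" where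
  "inside_decomposition X S E \<longleftrightarrow>
     (\<forall>(c, c')\<in>S. is_8cycle X c \<and> inside_8cycle X c c') \<and>
     pairwise (\<lambda>p q. fst p \<inter> fst q = {} \<and> snd p \<inter> snd q = {}) S \<and>
     \<Union> (fst ` S) = E \<and> \<Union> (snd ` S) = E"

lemma inside_decomposition_UN:
  assumes dec: "\<And>i. i \<in> I \<Longrightarrow> inside_decomposition X (S i) (E i)"
    and disj: "pairwise (\<lambda>i j. E i \<inter> E j = {}) I"
  shows "inside_decomposition X (\<Union>i\<in>I. S i) (\<Union>i\<in>I. E i)"
proof -
  have sub: "fst p \<subseteq> E i" "snd p \<subseteq> E i" if "i \<in> I" "p \<in> S i" for i p
    using dec[OF that(1)] that(2) unfolding inside_decomposition_def by auto
  have "pairwise (\<lambda>p q. fst p \<inter> fst q = {} \<and> snd p \<inter> snd q = {}) (\<Union>i\<in>I. S i)"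
  proof (rule pairwiseI, elim UN_E)
    fix p q i j assume p: "p \<in> S i" and q: "q \<in> S j" and ij: "i \<in> I" "j \<in> I" and "p \<noteq> q"
    show "fst p \<inter> fst q = {} \<and> snd p \<inter> snd q = {}"
    proof (cases "i = j")
      case True
      then show ?thesis using dec[OF ij(1)] p q \<open>p \<noteq> q\<close>
        unfolding inside_decomposition_def pairwise_def by blast
    next
      case False
      then have "E i \<inter> E j = {}" using disj ij unfolding pairwise_def by blast
      then show ?thesis using sub[OF ij(1) p] sub[OF ij(2) q] by blast
    qed
  qed
  moreover have cover: "\<Union> (g ` (\<Union>i\<in>I. S i)) = (\<Union>i\<in>I. E i)" if "g = fst \<or> g = snd" for g
  proof -
    have "\<Union> (g ` S i) = E i" if "i \<in> I" for i
      using dec[OF that] \<open>g = fst \<or> g = snd\<close> unfolding inside_decomposition_def by blast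
    moreover have "\<Union> (g ` (\<Union>i\<in>I. S i)) = (\<Union>i\<in>I. \<Union> (g ` S i))" by blast
    ultimately show ?thesis by simp
  qed
  moreover have "\<forall>(c, c')\<in>S i. is_8cycle X c \<and> inside_8cycle X c c'" if "i \<in> I" for i
    using dec[OF that] unfolding inside_decomposition_def by (elim conjE)
  ultimately show ?thesis
    unfolding inside_decomposition_def using cover[of fst] cover[of snd] by fastforce
qed

lemma inside_decomposition_subset:
  assumes "inside_decomposition X S E"
  shows "E \<subseteq> complete_edges X"
proof
  fix e assume "e \<in> E"
  then obtain p where "p \<in> S" "e \<in> fst p"
    using assms unfolding inside_decomposition_def by blast
  moreover have "is_8cycle X (fst p)" if "p \<in> S" for p
    using assms that unfolding inside_decomposition_def by (cases p) auto
  ultimately show "e \<in> complete_edges X" using is_8cycleD(1) by blast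
qed

lemma inside_decomposition_packing:
  assumes dec: "inside_decomposition X S (complete_edges X - L)" and L: "L \<subseteq> complete_edges X"
  shows "cycle8_packing X (fst ` S) L" "almost_2_perfect X (fst ` S) L"
proof -
  have cyc: "is_8cycle X c" "is_8cycle X c'" and ins: "inside_8cycle X c c'" if "(c, c') \<in> S" for c c'
    using dec that unfolding inside_decomposition_def inside_8cycle_def by auto
  have disj: "fst p \<inter> fst q = {}" "snd p \<inter> snd q = {}" if "p \<in> S" "q \<in> S" "p \<noteq> q" for p q
    using dec that unfolding inside_decomposition_def pairwise_def by blast+
  have nonempty: "fst p \<noteq> {}" "snd p \<noteq> {}" if "p \<in> S" for p
  proof -
    have "(fst p, snd p) \<in> S" using that by simp
    then have "card (fst p) = 8" "card (snd p) = 8" using cyc is_8cycleD(2) by blast+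
    then show "fst p \<noteq> {}" "snd p \<noteq> {}" by auto
  qed
  have fst_inj: "inj_on fst S" and snd_inj: "inj_on snd S"
    using disj nonempty by (metis inj_onI Int_absorb)+
  define f where "f = snd \<circ> the_inv_into S fst"
  have f: "f (fst p) = snd p" if "p \<in> S" for p
    unfolding f_def using the_inv_into_f_f[OF fst_inj that] by simp
  have "f ` fst ` S = snd ` S"
    using f by (force simp: image_iff)
  have packing: "cycle8_packing X (g ` S) L" if "g = fst \<or> g = snd" and "inj_on g S" for g
    unfolding cycle8_packing_def
  proof (intro conjI)
    show "\<forall>c\<in>g ` S. is_8cycle X c" using cyc that(1) by auto
    show "\<forall>c1\<in>g ` S. \<forall>c2\<in>g ` S. c1 \<noteq> c2 \<longrightarrow> c1 \<inter> c2 = {}"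
      using disj that(1) by fastforce
    show "L = complete_edges X - \<Union> (g ` S)"
      using dec L that(1) unfolding inside_decomposition_def by auto
  qed
  show "cycle8_packing X (fst ` S) L" using packing fst_inj by blast
  have "inj_on f (fst ` S)"
  proof (rule inj_onI)
    fix x y assume "x \<in> fst ` S" "y \<in> fst ` S" "f x = f y"
    then obtain p q where "p \<in> S" "q \<in> S" "x = fst p" "y = fst q" by blast
    then show "x = y" using f inj_onD[OF snd_inj] \<open>f x = f y\<close> by metis
  qed
  moreover have "\<forall>c\<in>fst ` S. inside_8cycle X c (f c)" using ins f by fastforce
  moreover have "cycle8_packing X (f ` fst ` S) L"
    using packing snd_inj \<open>f ` fst ` S = snd ` S\<close> by simp
  ultimately show "almost_2_perfect X (fst ` S) L"
    unfolding almost_2_perfect_def by blast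
qed

section \<open>Transporting small designs checked by evaluation\<close>

lemma distinct_concat_nth_disjoint:
  assumes "distinct (concat xss)" "i < length xss" "j < length xss" "i \<noteq> j"
  shows "set (xss ! i) \<inter> set (xss ! j) = {}"
  using assms
proof (induction xss arbitrary: i j)
  case (Cons xs xss)
  have head: "set xs \<inter> set (xss ! k) = {}" if "k < length xss" for k
    using Cons.prems(1) nth_mem[OF that] by (simp, blast)
  show ?case
  proof (cases i)
    case 0
    then obtain j' where "j = Suc j'" using Cons.prems(4) by (cases j) auto
    then show ?thesis using 0 head Cons.prems(3) by simp
  next
    case (Suc i')
    show ?thesis
    proof (cases j)
      case 0
      then show ?thesis using Suc head Cons.prems(2) by auto
    next
      case (Suc j')
      then show ?thesis
        using \<open>i = Suc i'\<close> Cons.IH[of i' j'] Cons.prems by simp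
    qed
  qed
qed simp

text \<open>Edges as ordered pairs, so that designs on small vertex sets can be checked by evaluation.\<close>

definition edge_pairs :: "nat list \<Rightarrow> (nat \<times> nat) list" where
  "edge_pairs vs = map (\<lambda>i. (min (vs ! i) (vs ! ((i + 1) mod length vs)),
                              max (vs ! i) (vs ! ((i + 1) mod length vs)))) [0..<length vs]"

definition edge_of :: "(nat \<Rightarrow> 'a) \<Rightarrow> nat \<times> nat \<Rightarrow> 'a set" where
  "edge_of g = (\<lambda>(a, b). {g a, g b})"

lemma cycle_edges_map: "cycle_edges (map g vs) = edge_of g ` set (edge_pairs vs)"
proof -
  have "cycle_edges (map g vs) = (\<lambda>i. {g (vs ! i), g (vs ! ((i + 1) mod length vs))}) ` {..<length vs}"
    unfolding cycle_edges_conv_image length_map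
    by (rule image_cong[OF refl]) (simp add: succ_mod_less)
  moreover have "{g (min x y), g (max x y)} = {g x, g y}" for x y :: nat
    by (cases "x \<le> y") (auto simp: min_def max_def)
  ultimately show ?thesis
    unfolding edge_pairs_def edge_of_def by (simp add: image_image atLeast0LessThan)
qed

definition pairs_below :: "nat \<Rightarrow> (nat \<times> nat) list" where
  "pairs_below N = [(a, b). b \<leftarrow> [0..<N], a \<leftarrow> [0..<b]]"

lemma set_pairs_below: "set (pairs_below N) = {(a, b). a < b \<and> b < N}"
  unfolding pairs_below_def by auto

definition decomposes_pairs ::
    "nat list list \<Rightarrow> nat \<Rightarrow> (nat \<Rightarrow> nat \<Rightarrow> bool) \<Rightarrow> bool" where
  "decomposes_pairs cs N P \<longleftrightarrow>
     distinct (concat (map edge_pairs cs)) \<and>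
     set (concat (map edge_pairs cs)) = set (filter (\<lambda>(a, b). P a b) (pairs_below N))"

definition inside_cycle_pair :: "nat \<Rightarrow> nat list \<times> nat list \<Rightarrow> bool" where
  "inside_cycle_pair N = (\<lambda>(vs, ws). length vs = 8 \<and> distinct vs \<and> (\<forall>v\<in>set vs. v < N) \<and>
     length ws = 8 \<and> distinct ws \<and> set ws = set vs \<and> set (edge_pairs vs) \<inter> set (edge_pairs ws) = {})"

definition local_design ::
    "(nat list \<times> nat list) list \<Rightarrow> nat \<Rightarrow> (nat \<Rightarrow> nat \<Rightarrow> bool) \<Rightarrow> bool" where
  "local_design T N P \<longleftrightarrow>
     (\<forall>t\<in>set T. inside_cycle_pair N t) \<and>
     decomposes_pairs (map fst T) N P \<and> decomposes_pairs (map snd T) N P"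

lemma set_edge_pairs_subset:
  assumes "distinct vs" "2 \<le> length vs" "\<forall>v\<in>set vs. v < N"
  shows "set (edge_pairs vs) \<subseteq> {(a, b). a < b \<and> b < N}"
proof
  fix e assume "e \<in> set (edge_pairs vs)"
  then obtain i where i: "i < length vs"
    and e: "e = (min (vs ! i) (vs ! (Suc i mod length vs)), max (vs ! i) (vs ! (Suc i mod length vs)))"
    unfolding edge_pairs_def by auto
  have "vs ! i \<noteq> vs ! (Suc i mod length vs)"
    using succ_mod_neq[OF i assms(2)] succ_mod_less[OF i] i assms(1) by (simp add: nth_eq_iff_index_eq)
  moreover have "vs ! i < N" "vs ! (Suc i mod length vs) < N"
    using assms(3) i succ_mod_less[OF i] by simp_all
  ultimately show "e \<in> {(a, b). a < b \<and> b < N}" unfolding e by (simp add: min_def max_def)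
qed

lemma inj_on_edge_of:
  assumes "inj_on g {..<N}"
  shows "inj_on (edge_of g) {(a, b). a < b \<and> b < N}"
proof (rule inj_onI, clarify)
  fix a b a' b' assume ab: "a < b" "b < N" "a' < b'" "b' < N"
    and eq: "edge_of g (a, b) = edge_of g (a', b')"
  have g_eq: "g x = g y \<longleftrightarrow> x = y" if "x < N" "y < N" for x y
    using inj_on_eq_iff[OF assms] that by simp
  from eq have "(g a = g a' \<and> g b = g b') \<or> (g a = g b' \<and> g b = g a')"
    unfolding edge_of_def by (simp add: doubleton_eq_iff)
  then show "a = a' \<and> b = b'" using ab g_eq[of a a'] g_eq[of b b'] g_eq[of a b'] g_eq[of b a'] by auto
qed

lemma decomposes_pairs_subset:
  assumes "decomposes_pairs cs N P" "c \<in> set cs"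
  shows "set (edge_pairs c) \<subseteq> {(a, b). a < b \<and> b < N}"
  using assms unfolding decomposes_pairs_def by (auto simp: set_pairs_below)

lemma decomposes_pairs_disjoint:
  assumes "decomposes_pairs cs N P" "i < length cs" "j < length cs" "i \<noteq> j"
  shows "set (edge_pairs (cs ! i)) \<inter> set (edge_pairs (cs ! j)) = {}"
  using distinct_concat_nth_disjoint[of "map edge_pairs cs" i j] assms
  unfolding decomposes_pairs_def by simp

lemma decomposes_pairs_Union:
  assumes "decomposes_pairs cs N P"
  shows "(\<Union>c\<in>set cs. set (edge_pairs c)) = {(a, b). a < b \<and> b < N \<and> P a b}"
  using assms unfolding decomposes_pairs_def set_concat by (auto simp: set_pairs_below)

lemma cycle_edges_map_disjoint:
  assumes "inj_on g {..<N}"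
    and "set (edge_pairs us) \<subseteq> {(a, b). a < b \<and> b < N}"
    and "set (edge_pairs vs) \<subseteq> {(a, b). a < b \<and> b < N}"
    and "set (edge_pairs us) \<inter> set (edge_pairs vs) = {}"
  shows "cycle_edges (map g us) \<inter> cycle_edges (map g vs) = {}"
  unfolding cycle_edges_map
  using inj_on_image_Int[OF inj_on_edge_of[OF assms(1)] assms(2,3)] assms(4) by simp

lemma decomposes_pairs_map_disjoint:
  assumes "decomposes_pairs cs N P" "inj_on g {..<N}" "i < length cs" "j < length cs" "i \<noteq> j"
  shows "cycle_edges (map g (cs ! i)) \<inter> cycle_edges (map g (cs ! j)) = {}"
  using decomposes_pairs_subset[OF assms(1) nth_mem[OF assms(3)]]
    decomposes_pairs_subset[OF assms(1) nth_mem[OF assms(4)]] decomposes_pairs_disjoint[OF assms(1,3-5)]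
  by (rule cycle_edges_map_disjoint[OF assms(2)])

lemma decomposes_pairs_map_Union:
  assumes "decomposes_pairs cs N P"
  shows "(\<Union>c\<in>set cs. cycle_edges (map g c)) = edge_of g ` {(a, b). a < b \<and> b < N \<and> P a b}"
  unfolding cycle_edges_map image_UN[symmetric] decomposes_pairs_Union[OF assms] ..

lemma is_8cycle_map:
  assumes "inj_on g {..<N}" "g ` {..<N} \<subseteq> X" "length vs = 8" "distinct vs" "\<forall>v\<in>set vs. v < N"
  shows "is_8cycle X (cycle_edges (map g vs))"
proof -
  have "distinct (map g vs)"
    using assms(4,5) inj_on_subset[OF assms(1)] by (auto simp: distinct_map)
  moreover have "set (map g vs) \<subseteq> X" using assms(2,5) by auto
  ultimately show ?thesis
    unfolding is_8cycle_def using assms(3) by (intro exI[of _ "map g vs"]) simp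
qed

lemma inside_cycle_pair_map:
  assumes "inside_cycle_pair N (vs, ws)" "inj_on g {..<N}" "g ` {..<N} \<subseteq> X"
  shows "is_8cycle X (cycle_edges (map g vs))"
    "inside_8cycle X (cycle_edges (map g vs)) (cycle_edges (map g ws))"
proof -
  have ok: "length vs = 8" "distinct vs" "\<forall>v\<in>set vs. v < N" "length ws = 8" "distinct ws"
      "set ws = set vs" "set (edge_pairs vs) \<inter> set (edge_pairs ws) = {}"
    using assms(1) unfolding inside_cycle_pair_def by simp_all
  show "is_8cycle X (cycle_edges (map g vs))"
    using is_8cycle_map[OF assms(2,3)] ok by simp
  have "cycle_edges (map g vs) \<inter> cycle_edges (map g ws) = {}"
    using ok by (intro cycle_edges_map_disjoint[OF assms(2)] set_edge_pairs_subset) simp_all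
  moreover have "cyc_vertices (cycle_edges (map g ws)) = cyc_vertices (cycle_edges (map g vs))"
  proof -
    have "map g vs \<noteq> []" "map g ws \<noteq> []" using ok(1,4) by auto
    then show ?thesis using ok(6) by (simp add: cyc_vertices_cycle_edges)
  qed
  ultimately show "inside_8cycle X (cycle_edges (map g vs)) (cycle_edges (map g ws))"
    unfolding inside_8cycle_def using is_8cycle_map[OF assms(2,3)] ok by simp
qed

lemma inside_decomposition_local_design:
  assumes T: "local_design T N P" and inj: "inj_on g {..<N}" and range: "g ` {..<N} \<subseteq> X"
  shows "inside_decomposition X
           ((\<lambda>(vs, ws). (cycle_edges (map g vs), cycle_edges (map g ws))) ` set T)
           (edge_of g ` {(a, b). a < b \<and> b < N \<and> P a b})"
proof -
  define F where "F = (\<lambda>(vs, ws). (cycle_edges (map g vs), cycle_edges (map g ws)))"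
  have F: "F t = (cycle_edges (map g (fst t)), cycle_edges (map g (snd t)))" for t
    unfolding F_def by (simp add: case_prod_beta)
  have dec: "decomposes_pairs (map fst T) N P" "decomposes_pairs (map snd T) N P"
    using T unfolding local_design_def by blast+
  have "\<forall>(c, c')\<in>F ` set T. is_8cycle X c \<and> inside_8cycle X c c'"
  proof (rule ballI)
    fix p assume "p \<in> F ` set T"
    then obtain vs ws where t: "(vs, ws) \<in> set T" and p: "p = F (vs, ws)" by auto
    have "inside_cycle_pair N (vs, ws)" using T t unfolding local_design_def by blast
    then show "case p of (c, c') \<Rightarrow> is_8cycle X c \<and> inside_8cycle X c c'"
      unfolding p using inside_cycle_pair_map[OF _ inj range] by (simp add: F)
  qed
  moreover have "pairwise (\<lambda>p q. fst p \<inter> fst q = {} \<and> snd p \<inter> snd q = {}) (F ` set T)"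
  proof (rule pairwiseI)
    fix p q assume p: "p \<in> F ` set T" and q: "q \<in> F ` set T" and "p \<noteq> q"
    have "\<exists>i < length T. x = F (T ! i)" if "x \<in> F ` set T" for x
      using that in_set_conv_nth[of _ T] by (metis imageE)
    then obtain i j where ij: "i < length T" "j < length T" "p = F (T ! i)" "q = F (T ! j)"
      using p q by blast
    with \<open>p \<noteq> q\<close> have "i \<noteq> j" by blast
    then show "fst p \<inter> fst q = {} \<and> snd p \<inter> snd q = {}"
      using decomposes_pairs_map_disjoint[OF dec(1) inj, of i j]
        decomposes_pairs_map_disjoint[OF dec(2) inj, of i j] ij
      by (simp add: F)
  qed
  moreover have "\<Union> (fst ` F ` set T) = edge_of g ` {(a, b). a < b \<and> b < N \<and> P a b}"
    "\<Union> (snd ` F ` set T) = edge_of g ` {(a, b). a < b \<and> b < N \<and> P a b}"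
    using decomposes_pairs_map_Union[OF dec(1), of g] decomposes_pairs_map_Union[OF dec(2), of g]
    by (simp_all add: F image_image)
  ultimately show ?thesis
    unfolding inside_decomposition_def F_def[symmetric] by blast
qed

text \<open>The local vertices 0--3 and 4--7 form the two blocks of a piece; vertex 8 of K_9 is the extra point.\<close>

definition K9_minus_C4_edge :: "nat \<Rightarrow> nat \<Rightarrow> bool" where
  "K9_minus_C4_edge a b \<longleftrightarrow> a < b \<and> b \<le> 8 \<and> \<not> (b < 4 \<and> odd (b - a))"

definition K44_plus_2C4_edge :: "nat \<Rightarrow> nat \<Rightarrow> bool" where
  "K44_plus_2C4_edge a b \<longleftrightarrow> a < b \<and> b < 8 \<and> (a < 4 \<and> 4 \<le> b \<or> odd (b - a))"

definition K44_edge :: "nat \<Rightarrow> nat \<Rightarrow> bool" where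
  "K44_edge a b \<longleftrightarrow> a < 4 \<and> 4 \<le> b \<and> b < 8"

definition K9_minus_C4_design :: "(nat list \<times> nat list) list" where
  "K9_minus_C4_design =
     [([8, 0, 7, 1, 5, 6, 2, 4], [8, 2, 0, 6, 1, 4, 7, 5]),
      ([8, 1, 3, 6, 7, 4, 5, 2], [8, 3, 5, 1, 7, 2, 4, 6]),
      ([8, 3, 4, 1, 6, 0, 5, 7], [8, 0, 4, 5, 6, 7, 3, 1]),
      ([8, 5, 3, 7, 2, 0, 4, 6], [8, 4, 3, 6, 2, 5, 0, 7])]"

definition K44_plus_2C4_design :: "(nat list \<times> nat list) list" where
  "K44_plus_2C4_design =
     [([0, 1, 2, 3, 4, 5, 6, 7], [0, 3, 5, 1, 6, 2, 7, 4]),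
      ([0, 3, 5, 1, 6, 2, 7, 4], [0, 5, 2, 4, 1, 7, 3, 6]),
      ([0, 5, 2, 4, 1, 7, 3, 6], [0, 1, 2, 3, 4, 5, 6, 7])]"

definition K44_design :: "(nat list \<times> nat list) list" where
  "K44_design =
     [([0, 4, 1, 5, 2, 6, 3, 7], [0, 5, 3, 4, 2, 7, 1, 6]),
      ([0, 5, 3, 4, 2, 7, 1, 6], [0, 4, 1, 5, 2, 6, 3, 7])]"

lemma local_design_K9_minus_C4: "local_design K9_minus_C4_design 9 K9_minus_C4_edge"
  by code_simp

lemma local_design_K44_plus_2C4: "local_design K44_plus_2C4_design 8 K44_plus_2C4_edge"
  by code_simp

lemma local_design_K44: "local_design K44_design 8 K44_edge"
  by code_simp

section \<open>The global layout\<close>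

text \<open>Vertex 4 * \<beta> + r + 1 is position r of block \<beta>; vertex 0 lies in no block.\<close>

definition block_vertex :: "nat \<Rightarrow> nat \<Rightarrow> nat" where
  "block_vertex \<beta> r = 4 * \<beta> + r + 1"

definition block_of :: "nat \<Rightarrow> nat" where
  "block_of x = (x - 1) div 4"

lemma block_of_block_vertex [simp]: "r < 4 \<Longrightarrow> block_of (block_vertex \<beta> r) = \<beta>"
  unfolding block_of_def block_vertex_def by simp

lemma block_vertex_pos [simp]: "0 < block_vertex \<beta> r" "block_vertex \<beta> r \<noteq> 0"
  unfolding block_vertex_def by simp_all

lemma block_vertex_less_same_block: "r < s \<Longrightarrow> block_vertex \<beta> r < block_vertex \<beta> s"
  and block_vertex_less_blocks: "\<beta> < \<beta>' \<Longrightarrow> r < 4 \<Longrightarrow> block_vertex \<beta> r < block_vertex \<beta>' s"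
  unfolding block_vertex_def by simp_all

lemma block_vertex_block_of:
  assumes "x \<noteq> 0"
  shows "x = block_vertex (block_of x) ((x - 1) mod 4)"
  using assms unfolding block_vertex_def block_of_def by simp

datatype piece = K9_minus_C4 nat | K44_plus_2C4 nat | K44 nat nat

text \<open>
  The piece containing the edge {x, y}, for x < y. The edges assigned to K44_plus_2C4 0,
  which would use the nonexistent block -2, form the leave: the 4-cycle inside block 0.
\<close>

definition pair_owner :: "nat \<Rightarrow> nat \<Rightarrow> piece" where
  "pair_owner x y =
     (if x = 0 then K9_minus_C4 (block_of y div 2)
      else if block_of x = block_of y \<and> even (block_of x) \<and> odd (y - x)
        then K44_plus_2C4 ((block_of x + 2) div 4)
      else if block_of x div 2 = block_of y div 2 then K9_minus_C4 (block_of x div 2)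
      else if block_of x mod 4 = 2 \<and> block_of y = block_of x + 2
        then K44_plus_2C4 ((block_of x + 2) div 4)
      else K44 (block_of x) (block_of y))"

lemma pair_owner_from_0:
  "r < 4 \<Longrightarrow> pair_owner 0 (block_vertex \<beta> r) = K9_minus_C4 (\<beta> div 2)"
  unfolding pair_owner_def by simp

lemma pair_owner_same_block:
  assumes "r < s" "s < 4"
  shows "pair_owner (block_vertex \<beta> r) (block_vertex \<beta> s) =
           (if even \<beta> \<and> odd (s - r) then K44_plus_2C4 ((\<beta> + 2) div 4) else K9_minus_C4 (\<beta> div 2))"
proof -
  have "block_vertex \<beta> s - block_vertex \<beta> r = s - r"
    unfolding block_vertex_def using assms by simp
  then show ?thesis unfolding pair_owner_def using assms by simp
qed

lemma pair_owner_distinct_blocks: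
  assumes "\<beta> < \<beta>'" "r < 4" "s < 4"
  shows "pair_owner (block_vertex \<beta> r) (block_vertex \<beta>' s) =
           (if \<beta> div 2 = \<beta>' div 2 then K9_minus_C4 (\<beta> div 2)
            else if \<beta> mod 4 = 2 \<and> \<beta>' = \<beta> + 2 then K44_plus_2C4 ((\<beta> + 2) div 4)
            else K44 \<beta> \<beta>')"
  unfolding pair_owner_def using assms by simp

definition edge_owner :: "nat set \<Rightarrow> piece" where
  "edge_owner e = pair_owner (Min e) (Max e)"

lemma edge_owner_doubleton: "x < y \<Longrightarrow> edge_owner {x, y} = pair_owner x y"
  unfolding edge_owner_def by (simp add: min_def max_def)

fun piece_blocks :: "piece \<Rightarrow> nat \<times> nat" where
  "piece_blocks (K9_minus_C4 g) = (2 * g, 2 * g + 1)"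
| "piece_blocks (K44_plus_2C4 j) = (4 * j - 2, 4 * j)"
| "piece_blocks (K44 \<beta> \<beta>') = (\<beta>, \<beta>')"

definition piece_vertex :: "piece \<Rightarrow> nat \<Rightarrow> nat" where
  "piece_vertex p a =
     (if a < 4 then block_vertex (fst (piece_blocks p)) a
      else if a < 8 then block_vertex (snd (piece_blocks p)) (a - 4)
      else 0)"

lemma piece_vertex_first: "r < 4 \<Longrightarrow> piece_vertex p r = block_vertex (fst (piece_blocks p)) r"
  and piece_vertex_second:
    "4 \<le> a \<Longrightarrow> a < 8 \<Longrightarrow> piece_vertex p a = block_vertex (snd (piece_blocks p)) (a - 4)"
  and piece_vertex_8: "piece_vertex p 8 = 0"
  unfolding piece_vertex_def by simp_all

fun piece_order :: "piece \<Rightarrow> nat" where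
  "piece_order (K9_minus_C4 _) = 9"
| "piece_order _ = 8"

fun piece_edge :: "piece \<Rightarrow> nat \<Rightarrow> nat \<Rightarrow> bool" where
  "piece_edge (K9_minus_C4 _) = K9_minus_C4_edge"
| "piece_edge (K44_plus_2C4 _) = K44_plus_2C4_edge"
| "piece_edge (K44 _ _) = K44_edge"

fun piece_design :: "piece \<Rightarrow> (nat list \<times> nat list) list" where
  "piece_design (K9_minus_C4 _) = K9_minus_C4_design"
| "piece_design (K44_plus_2C4 _) = K44_plus_2C4_design"
| "piece_design (K44 _ _) = K44_design"

fun layout_piece :: "nat \<Rightarrow> piece \<Rightarrow> bool" where
  "layout_piece k (K9_minus_C4 g) \<longleftrightarrow> g \<le> 2 * k"
| "layout_piece k (K44_plus_2C4 j) \<longleftrightarrow> 1 \<le> j \<and> j \<le> k"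
| "layout_piece k (K44 \<beta> \<beta>') \<longleftrightarrow>
     \<beta> < \<beta>' \<and> \<beta>' \<le> 4 * k + 1 \<and> \<beta> div 2 \<noteq> \<beta>' div 2 \<and>
     \<not> (\<beta> mod 4 = 2 \<and> \<beta>' = \<beta> + 2)"

definition piece_edges :: "piece \<Rightarrow> nat set set" where
  "piece_edges p = edge_of (piece_vertex p) ` {(a, b). a < b \<and> b < piece_order p \<and> piece_edge p a b}"

definition piece_cycles :: "piece \<Rightarrow> (nat set set \<times> nat set set) set" where
  "piece_cycles p =
     (\<lambda>(vs, ws). (cycle_edges (map (piece_vertex p) vs), cycle_edges (map (piece_vertex p) ws)))
       ` set (piece_design p)"

lemma layout_piece_blocks:
  assumes "layout_piece k p"
  shows "fst (piece_blocks p) < snd (piece_blocks p)" "snd (piece_blocks p) \<le> 4 * k + 1"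
  using assms by (cases p; simp)+

lemma piece_vertex_inj:
  assumes "layout_piece k p"
  shows "inj_on (piece_vertex p) {..<piece_order p}"
proof -
  have neq: "piece_vertex p a \<noteq> piece_vertex p b" if "a < b" "b < 9" for a b
  proof (cases "b = 8")
    case True
    then show ?thesis using that unfolding piece_vertex_def by simp
  next
    case False
    then have "piece_vertex p a < piece_vertex p b"
      using layout_piece_blocks(1)[OF assms] that unfolding piece_vertex_def block_vertex_def by auto
    then show ?thesis by simp
  qed
  have "piece_order p \<le> 9" by (cases p) simp_all
  then show ?thesis
    by (intro inj_onI) (metis lessThan_iff neq linorder_neqE_nat order_less_le_trans)
qed

lemma piece_vertex_range:
  assumes "layout_piece k p" "a < piece_order p"
  shows "piece_vertex p a < 16 * k + 9"
proof -
  have "piece_order p \<le> 9" by (cases p) simp_all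
  then show ?thesis
    using layout_piece_blocks[OF assms(1)] assms(2)
    unfolding piece_vertex_def block_vertex_def by auto
qed

lemma local_design_piece: "local_design (piece_design p) (piece_order p) (piece_edge p)"
  by (cases p) (simp_all add: local_design_K9_minus_C4 local_design_K44_plus_2C4 local_design_K44)

lemma inside_decomposition_piece:
  assumes "layout_piece k p"
  shows "inside_decomposition {..<16 * k + 9} (piece_cycles p) (piece_edges p)"
  unfolding piece_cycles_def piece_edges_def
  using local_design_piece piece_vertex_inj[OF assms] piece_vertex_range[OF assms]
  by (intro inside_decomposition_local_design) auto

lemma edge_owner_K9_minus_C4_point:
  assumes "a < 8"
  shows "edge_owner (edge_of (piece_vertex (K9_minus_C4 g)) (a, 8)) = K9_minus_C4 g"
proof -
  obtain \<beta> r where "\<beta> div 2 = g" "r < 4" "piece_vertex (K9_minus_C4 g) a = block_vertex \<beta> r"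
  proof (cases "a < 4")
    case True
    then show ?thesis using that[of "2 * g" a] by (simp add: piece_vertex_first)
  next
    case False
    then show ?thesis using that[of "2 * g + 1" "a - 4"] assms by (simp add: piece_vertex_second)
  qed
  then show ?thesis
    by (simp add: edge_of_def piece_vertex_8 insert_commute edge_owner_doubleton pair_owner_from_0)
qed

lemma edge_owner_piece_edge:
  assumes p: "layout_piece k p" and ab: "a < b" "b < piece_order p" "piece_edge p a b"
  shows "edge_owner (edge_of (piece_vertex p) (a, b)) = p"
proof -
  have order: "piece_order p \<le> 9" by (cases p) simp_all
  consider "b = 8" | "b < 4" | "a < 4" "4 \<le> b" "b < 8" | "4 \<le> a" "b < 8"
    using ab(1,2) order by linarith
  then show ?thesis
  proof cases
    case 1
    then obtain g where g: "p = K9_minus_C4 g" using ab(2) by (cases p) auto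
    then show ?thesis using 1 ab(1) edge_owner_K9_minus_C4_point by simp
  next
    case 2
    let ?\<beta> = "fst (piece_blocks p)"
    have "edge_owner (edge_of (piece_vertex p) (a, b)) = pair_owner (block_vertex ?\<beta> a) (block_vertex ?\<beta> b)"
      using 2 ab(1) by (simp add: edge_of_def piece_vertex_first edge_owner_doubleton block_vertex_less_same_block)
    also have "\<dots> = p"
      using p ab 2 by (cases p) (auto simp: pair_owner_same_block K9_minus_C4_edge_def K44_plus_2C4_edge_def K44_edge_def)
    finally show ?thesis .
  next
    case 3
    let ?\<beta> = "fst (piece_blocks p)" and ?\<beta>' = "snd (piece_blocks p)"
    have "edge_of (piece_vertex p) (a, b) = {block_vertex ?\<beta> a, block_vertex ?\<beta>' (b - 4)}"
      using 3 by (simp add: edge_of_def piece_vertex_first piece_vertex_second)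
    then have "edge_owner (edge_of (piece_vertex p) (a, b)) =
        pair_owner (block_vertex ?\<beta> a) (block_vertex ?\<beta>' (b - 4))"
      using 3 layout_piece_blocks(1)[OF p] by (simp add: edge_owner_doubleton block_vertex_less_blocks)
    also have "\<dots> = p"
    proof (cases p)
      case (K44_plus_2C4 j)
      then obtain m where "j = Suc m" using p by (cases j) auto
      moreover have "Suc (Suc (4 * m)) mod 4 = 2" by presburger
      ultimately show ?thesis using K44_plus_2C4 3 by (simp add: pair_owner_distinct_blocks)
    qed (use p 3 in \<open>simp_all add: pair_owner_distinct_blocks\<close>)
    finally show ?thesis .
  next
    case 4
    let ?\<beta>' = "snd (piece_blocks p)"
    have "edge_of (piece_vertex p) (a, b) = {block_vertex ?\<beta>' (a - 4), block_vertex ?\<beta>' (b - 4)}"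
      using 4 ab(1) by (simp add: edge_of_def piece_vertex_second)
    then have "edge_owner (edge_of (piece_vertex p) (a, b)) =
        pair_owner (block_vertex ?\<beta>' (a - 4)) (block_vertex ?\<beta>' (b - 4))"
      using 4 ab(1) by (simp add: edge_owner_doubleton block_vertex_less_same_block)
    also have "\<dots> = p"
      using p ab 4 by (cases p) (auto simp: pair_owner_same_block K9_minus_C4_edge_def K44_plus_2C4_edge_def K44_edge_def)
    finally show ?thesis .
  qed
qed

lemma edge_owner_piece_edges:
  assumes "layout_piece k p" "e \<in> piece_edges p"
  shows "edge_owner e = p"
  using assms edge_owner_piece_edge unfolding piece_edges_def by blast

lemma piece_edges_memI:
  assumes "a < b" "b < piece_order p" "piece_edge p a b" "piece_vertex p a = x" "piece_vertex p b = y"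
  shows "{x, y} \<in> piece_edges p"
  unfolding piece_edges_def edge_of_def using assms by force

lemma piece_vertex_K9_minus_C4:
  assumes "r < 4"
  shows "piece_vertex (K9_minus_C4 (\<beta> div 2)) (4 * (\<beta> mod 2) + r) = block_vertex \<beta> r"
  unfolding piece_vertex_def using assms
  by (cases "even \<beta>") (auto simp: odd_iff_mod_2_eq_one odd_two_times_div_two_succ)

lemma pair_owner_covers_from_0:
  assumes "s < 4" "\<beta> \<le> 4 * k + 1"
  defines "p \<equiv> pair_owner 0 (block_vertex \<beta> s)"
  shows "layout_piece k p \<and> {0, block_vertex \<beta> s} \<in> piece_edges p"
proof -
  have p: "p = K9_minus_C4 (\<beta> div 2)" unfolding p_def using assms(1) by (rule pair_owner_from_0)
  have "{block_vertex \<beta> s, 0} \<in> piece_edges p"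
    unfolding p using assms(1)
    by (intro piece_edges_memI[of "4 * (\<beta> mod 2) + s" 8])
       (simp_all add: K9_minus_C4_edge_def piece_vertex_K9_minus_C4 piece_vertex_8)
  then show ?thesis using assms(2) by (simp add: p insert_commute)
qed

lemma pair_owner_covers_same_block:
  assumes "r < s" "s < 4" "\<beta> \<le> 4 * k + 1"
  defines "p \<equiv> pair_owner (block_vertex \<beta> r) (block_vertex \<beta> s)"
  assumes "p \<noteq> K44_plus_2C4 0"
  shows "layout_piece k p \<and> {block_vertex \<beta> r, block_vertex \<beta> s} \<in> piece_edges p"
proof (cases "even \<beta> \<and> odd (s - r)")
  case True
  then have p: "p = K44_plus_2C4 ((\<beta> + 2) div 4)"
    unfolding p_def using assms(1,2) by (simp add: pair_owner_same_block)
  then obtain m where m: "(\<beta> + 2) div 4 = Suc m"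
    using assms(5) by (cases "(\<beta> + 2) div 4") auto
  then have "\<beta> = 4 * m + 2 \<or> \<beta> = 4 * m + 4" using True by presburger
  then show ?thesis
  proof
    assume \<beta>: "\<beta> = 4 * m + 2"
    have "{block_vertex \<beta> r, block_vertex \<beta> s} \<in> piece_edges p"
      unfolding p m using assms(1,2) True
      by (intro piece_edges_memI[of r s]) (simp_all add: K44_plus_2C4_edge_def piece_vertex_def \<beta>)
    then show ?thesis using assms(3) unfolding p m \<beta> by simp
  next
    assume \<beta>: "\<beta> = 4 * m + 4"
    have "{block_vertex \<beta> r, block_vertex \<beta> s} \<in> piece_edges p"
      unfolding p m using assms(1,2) True
      by (intro piece_edges_memI[of "r + 4" "s + 4"]) (simp_all add: K44_plus_2C4_edge_def piece_vertex_def \<beta> add.commute)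
    then show ?thesis using assms(3) unfolding p m \<beta> by simp
  qed
next
  case False
  then have p: "p = K9_minus_C4 (\<beta> div 2)"
    unfolding p_def using assms(1,2) by (simp add: pair_owner_same_block)
  have "{block_vertex \<beta> r, block_vertex \<beta> s} \<in> piece_edges p"
    unfolding p using assms(1,2) False
    by (intro piece_edges_memI[of "4 * (\<beta> mod 2) + r" "4 * (\<beta> mod 2) + s"])
       (auto simp: K9_minus_C4_edge_def piece_vertex_K9_minus_C4 odd_iff_mod_2_eq_one)
  then show ?thesis using assms(3) by (simp add: p)
qed

lemma pair_owner_covers_distinct_blocks:
  assumes "\<alpha> < \<beta>" "r < 4" "s < 4" "\<beta> \<le> 4 * k + 1"
  defines "p \<equiv> pair_owner (block_vertex \<alpha> r) (block_vertex \<beta> s)"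
  shows "layout_piece k p \<and> {block_vertex \<alpha> r, block_vertex \<beta> s} \<in> piece_edges p"
proof -
  consider (group) "\<alpha> div 2 = \<beta> div 2"
    | (linked) "\<alpha> div 2 \<noteq> \<beta> div 2" "\<alpha> mod 4 = 2" "\<beta> = \<alpha> + 2"
    | (bipartite) "\<alpha> div 2 \<noteq> \<beta> div 2" "\<not> (\<alpha> mod 4 = 2 \<and> \<beta> = \<alpha> + 2)"
    by blast
  then show ?thesis
  proof cases
    case group
    then have p: "p = K9_minus_C4 (\<alpha> div 2)"
      unfolding p_def using assms(1-3) by (simp add: pair_owner_distinct_blocks)
    have "\<alpha> mod 2 = 0" "\<beta> mod 2 = 1" using group assms(1) by presburger+
    then have "piece_vertex p r = block_vertex \<alpha> r" "piece_vertex p (s + 4) = block_vertex \<beta> s"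
      using piece_vertex_K9_minus_C4[OF assms(2), of \<alpha>] piece_vertex_K9_minus_C4[OF assms(3), of \<beta>] group
      by (simp_all add: p add.commute)
    then have "{block_vertex \<alpha> r, block_vertex \<beta> s} \<in> piece_edges p"
      using assms(2,3) by (intro piece_edges_memI[of r "s + 4"]) (simp_all add: p K9_minus_C4_edge_def)
    moreover have "\<alpha> div 2 \<le> 2 * k" using assms(1,4) by linarith
    ultimately show ?thesis by (simp add: p)
  next
    case linked
    define m where "m = \<alpha> div 4"
    have \<alpha>: "\<alpha> = 4 * m + 2" unfolding m_def using linked(2) div_mult_mod_eq[of \<alpha> 4] by linarith
    then have p: "p = K44_plus_2C4 (Suc m)"
      unfolding p_def using assms(1-3) linked by (simp add: pair_owner_distinct_blocks)
    have "{block_vertex \<alpha> r, block_vertex \<beta> s} \<in> piece_edges p"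
      unfolding p using assms(2,3) linked(3)
      by (intro piece_edges_memI[of r "s + 4"]) (simp_all add: K44_plus_2C4_edge_def piece_vertex_def block_vertex_def \<alpha>)
    then show ?thesis using assms(4) linked(3) by (simp add: p \<alpha>)
  next
    case bipartite
    then have p: "p = K44 \<alpha> \<beta>"
      unfolding p_def using assms(1-3) by (simp add: pair_owner_distinct_blocks)
    have "{block_vertex \<alpha> r, block_vertex \<beta> s} \<in> piece_edges p"
      unfolding p using assms(2,3)
      by (intro piece_edges_memI[of r "s + 4"]) (simp_all add: K44_edge_def piece_vertex_def)
    then show ?thesis using assms(1,4) bipartite by (simp add: p)
  qed
qed

lemma pair_owner_covers:
  assumes "x < y" "y < 16 * k + 9" "pair_owner x y \<noteq> K44_plus_2C4 0"
  shows "layout_piece k (pair_owner x y) \<and> {x, y} \<in> piece_edges (pair_owner x y)"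
proof -
  define \<beta> s where "\<beta> = block_of y" and "s = (y - 1) mod 4"
  have y: "y = block_vertex \<beta> s" and s: "s < 4"
    unfolding \<beta>_def s_def using block_vertex_block_of assms(1) by simp_all
  have \<beta>: "\<beta> \<le> 4 * k + 1" using assms(2) unfolding y block_vertex_def by linarith
  show ?thesis
  proof (cases "x = 0")
    case True
    then show ?thesis using pair_owner_covers_from_0[OF s \<beta>] y by simp
  next
    case False
    define \<alpha> r where "\<alpha> = block_of x" and "r = (x - 1) mod 4"
    have x: "x = block_vertex \<alpha> r" and r: "r < 4"
      unfolding \<alpha>_def r_def using block_vertex_block_of False by simp_all
    have "\<alpha> < \<beta> \<or> \<alpha> = \<beta> \<and> r < s"
      using assms(1) r s unfolding x y block_vertex_def by linarith
    then show ?thesis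
      using pair_owner_covers_distinct_blocks[OF _ r s \<beta>] pair_owner_covers_same_block[OF _ s \<beta>] assms(3)
      unfolding x y by blast
  qed
qed

lemma cycle_edges_1234: "cycle_edges [1, 2, 3, 4 :: nat] = {{1, 2}, {2, 3}, {3, 4}, {1, 4}}"
  unfolding cycle_edges_conv_image by (simp add: lessThan_Suc insert_commute)

lemma pair_owner_eq_K44_plus_2C4_0:
  assumes "x < y"
  shows "pair_owner x y = K44_plus_2C4 0 \<longleftrightarrow> {x, y} \<in> cycle_edges [1, 2, 3, 4]"
proof
  assume own: "pair_owner x y = K44_plus_2C4 0"
  then have "x \<noteq> 0" "block_of x = block_of y" "block_of x = 0" "odd (y - x)"
    unfolding pair_owner_def by (auto split: if_splits)
  then have "y \<le> 4" unfolding block_of_def by (simp add: div_eq_0_iff)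
  then have "x \<in> {1, 2, 3, 4}" "y \<in> {1, 2, 3, 4}" using assms \<open>x \<noteq> 0\<close> by auto
  then have "(x, y) \<in> {(1, 2), (2, 3), (3, 4), (1, 4)}"
    using assms \<open>odd (y - x)\<close> by auto
  then show "{x, y} \<in> cycle_edges [1, 2, 3, 4]"
    unfolding cycle_edges_1234 by auto
next
  assume "{x, y} \<in> cycle_edges [1, 2, 3, 4]"
  then have "(x, y) \<in> {(1, 2), (2, 3), (3, 4), (1, 4)}"
    using assms unfolding cycle_edges_1234 by (auto simp: doubleton_eq_iff)
  then show "pair_owner x y = K44_plus_2C4 0"
    unfolding pair_owner_def block_of_def by auto
qed

lemma Union_piece_edges:
  "(\<Union>p\<in>{p. layout_piece k p}. piece_edges p) =
     complete_edges {..<16 * k + 9} - cycle_edges [1, 2, 3, 4]"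
proof (intro equalityI subsetI)
  fix e assume "e \<in> (\<Union>p\<in>{p. layout_piece k p}. piece_edges p)"
  then obtain p where p: "layout_piece k p" and e: "e \<in> piece_edges p" by blast
  have "e \<in> complete_edges {..<16 * k + 9}"
    using inside_decomposition_subset[OF inside_decomposition_piece[OF p]] e by blast
  then obtain x y where xy: "e = {x, y}" "x < y"
    unfolding complete_edges_def by (auto elim!: linorder_neqE_nat simp: insert_commute)
  have "pair_owner x y = p" using edge_owner_piece_edges[OF p e] xy by (simp add: edge_owner_doubleton)
  moreover have "p \<noteq> K44_plus_2C4 0" using p by auto
  ultimately show "e \<in> complete_edges {..<16 * k + 9} - cycle_edges [1, 2, 3, 4]"
    using pair_owner_eq_K44_plus_2C4_0[OF xy(2)] \<open>e \<in> complete_edges _\<close> xy(1) by auto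
next
  fix e assume e: "e \<in> complete_edges {..<16 * k + 9} - cycle_edges [1, 2, 3, 4]"
  then obtain x y where xy: "e = {x, y}" "x < y" "y < 16 * k + 9"
    unfolding complete_edges_def by (auto elim!: linorder_neqE_nat simp: insert_commute)
  then have "pair_owner x y \<noteq> K44_plus_2C4 0" using pair_owner_eq_K44_plus_2C4_0 e by auto
  then show "e \<in> (\<Union>p\<in>{p. layout_piece k p}. piece_edges p)"
    using pair_owner_covers[OF xy(2,3)] xy(1) by blast
qed

lemma pairwise_disjoint_piece_edges:
  "pairwise (\<lambda>p q. piece_edges p \<inter> piece_edges q = {}) {p. layout_piece k p}"
  using edge_owner_piece_edges unfolding pairwise_def by blast

lemma inside_decomposition_layout:
  "inside_decomposition {..<16 * k + 9} (\<Union>p\<in>{p. layout_piece k p}. piece_cycles p)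
     (complete_edges {..<16 * k + 9} - cycle_edges [1, 2, 3, 4])"
  unfolding Union_piece_edges[symmetric]
  by (rule inside_decomposition_UN[OF inside_decomposition_piece]) (simp_all add: pairwise_disjoint_piece_edges)

theorem lemma3p5:
  fixes n :: nat
  assumes "n mod 16 = 9"
  shows "\<exists>C L. max_cycle8_packing {..<n} C L \<and> almost_2_perfect {..<n} C L"
proof -
  define k where "k = n div 16"
  have n: "n = 16 * k + 9" unfolding k_def using div_mult_mod_eq[of n 16] assms by linarith
  define L :: "nat set set" where "L = cycle_edges [1, 2, 3, 4]"
  define S where "S = (\<Union>p\<in>{p. layout_piece k p}. piece_cycles p)"
  have "inside_decomposition {..<n} S (complete_edges {..<n} - L)"
    unfolding S_def L_def n by (rule inside_decomposition_layout)
  moreover have "L \<subseteq> complete_edges {..<n}"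
  proof -
    have "L \<subseteq> complete_edges (set [1, 2, 3, 4])"
      unfolding L_def by (rule cycle_edges_subset_complete_edges) simp_all
    also have "\<dots> \<subseteq> complete_edges {..<n}" using n by (intro complete_edges_mono) auto
    finally show ?thesis .
  qed
  ultimately have packing: "cycle8_packing {..<n} (fst ` S) L" "almost_2_perfect {..<n} (fst ` S) L"
    by (rule inside_decomposition_packing)+
  have "card L = 4" unfolding L_def by (simp add: card_cycle_edges)
  then have "max_cycle8_packing {..<n} (fst ` S) L"
    unfolding max_cycle8_packing_def using packing(1) card_leave_ge_4[OF assms] by simp
  then show ?thesis using packing(2) by blast
qed

end
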